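(* With the notation and hypotheses of the average bit error rate $\overline{P}_{er}(\bar\gamma)$ (any $m_X,m_Y,\Omega_X,\Omega_Y,\alpha>0$, $\delta_1>0$, $\delta_3\in\mathbb{N}$, $\delta_{2,j}>0$), the diversity order is $$\mathcal{G}_d:=-\lim_{\bar\gamma\to\infty}\frac{\ln\overline{P}_{er}(\bar\gamma)}{\ln\bar\gamma}=\frac{\alpha}{2}m_X,$$ in particular it does not depend on $m_Y$, $\Omega_X$, $\Omega_Y$.
   Context: Fix parameters $m_X,m_Y,\Omega_X,\Omega_Y>0$. The Beaulieu–Xie shadowed envelope is a random variable $\bar R>0$ with density $$f_{\bar R}(r)=\frac{2r^{2m_X-1}}{\Gamma(m_X)}\left(\frac{m_Y\Omega_X}{m_Y\Omega_X+m_X\Omega_Y}\right)^{m_Y}\left(\frac{m_X}{\Omega_X}\right)^{m_X}{}_1F_1\!\left(m_Y;m_X;\frac{m_X^2\Omega_Y r^2}{\Omega_X(m_Y\Omega_X+m_X\Omega_Y)}\right)e^{-\frac{m_X}{\Omega_X}r^2},\quad r>0.$$ For $\alpha>0$ put $$\mathrm{C}_\alpha=\left[\frac{\Gamma(m_X)}{\Gamma(m_X+\frac{2}{\alpha})\,{}_2F_1\!\left(m_Y,-\frac{2}{\alpha};m_X;-\frac{m_X\Omega_Y}{m_Y\Omega_X}\right)}\right]^{\alpha/2}.$$ For $\bar\gamma>0$, the instantaneous SNR of the $\alpha$-Beaulieu–Xie shadowed channel with average SNR $\bar\gamma$ is the random variable $\gamma=\bar\gamma\,\big(\mathrm{C}_\alpha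 m_X\bar R^2/\Omega_X\big)^{2/\alpha}$, and the average bit error rate is $\overline{P}_{er}(\bar\gamma)=\delta_1\sum_{j=1}^{\delta_3}\mathbb{E}\big[Q(\sqrt{2\delta_{2,j}\gamma})\big]$ with $Q(x)=\frac{1}{\sqrt{2\pi}}\int_x^\infty e^{-t^2/2}dt$. Here ${}_1F_1(a;b;z)=\sum_{n\ge0}\frac{(a)_n}{(b)_n}\frac{z^n}{n!}$, ${}_2F_1$ is the Gauss hypergeometric function. *)

theory Defs
  imports "HOL-Analysis.Analysis"
begin

definition hyp1F1 :: "real \<Rightarrow> real \<Rightarrow> real \<Rightarrow> real" where
  "hyp1F1 a b z = (\<Sum>n. pochhammer a n / pochhammer b n * z ^ n / fact n)"

text \<open>Gauss hypergeometric power series (converges for |z| < 1).\<close>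
definition hyp2F1_series :: "real \<Rightarrow> real \<Rightarrow> real \<Rightarrow> real \<Rightarrow> real" where
  "hyp2F1_series a b c z =
     (\<Sum>n. pochhammer a n * pochhammer b n / pochhammer c n * z ^ n / fact n)"

text \<open>Gauss hypergeometric function 2F1(a,b;c;z): the series for z \<ge> 0 (|z| < 1),
  and for z < 0 its analytic continuation given by the Pfaff transformation
  2F1(a,b;c;z) = (1-z)^(-a) 2F1(a,c-b;c;z/(z-1)), where z/(z-1) lies in (0,1).\<close>
definition hyp2F1 :: "real \<Rightarrow> real \<Rightarrow> real \<Rightarrow> real \<Rightarrow> real" where
  "hyp2F1 a b c z =
     (if z < 0 then (1 - z) powr (-a) * hyp2F1_series a (c - b) c (z / (z - 1))
      else hyp2F1_series a b c z)"

definition bx_pdf :: "real \<Rightarrow> real \<Rightarrow> real \<Rightarrow> real \<Rightarrow> real \<Rightarrow> real" where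
  "bx_pdf mX mY OmX OmY r =
     2 * r powr (2 * mX - 1) / Gamma mX
     * (mY * OmX / (mY * OmX + mX * OmY)) powr mY
     * (mX / OmX) powr mX
     * hyp1F1 mY mX (mX\<^sup>2 * OmY * r\<^sup>2 / (OmX * (mY * OmX + mX * OmY)))
     * exp (- (mX / OmX) * r\<^sup>2)"

definition C_alpha :: "real \<Rightarrow> real \<Rightarrow> real \<Rightarrow> real \<Rightarrow> real \<Rightarrow> real" where
  "C_alpha mX mY OmX OmY \<alpha> =
     (Gamma mX / (Gamma (mX + 2 / \<alpha>)
        * hyp2F1 mY (- 2 / \<alpha>) mX (- (mX * OmY) / (mY * OmX)))) powr (\<alpha> / 2)"

definition inst_snr :: "real \<Rightarrow> real \<Rightarrow> real \<Rightarrow> real \<Rightarrow> real \<Rightarrow> real \<Rightarrow> real \<Rightarrow> real" where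
  "inst_snr mX mY OmX OmY \<alpha> gbar r =
     gbar * (C_alpha mX mY OmX OmY \<alpha> * mX * r\<^sup>2 / OmX) powr (2 / \<alpha>)"

definition Qfun :: "real \<Rightarrow> real" where
  "Qfun x = 1 / sqrt (2 * pi) * (LBINT t:{x..}. exp (- t\<^sup>2 / 2))"

text \<open>Average bit error rate; the expectation over the envelope is the integral
  against its density on (0,\<infinity>).\<close>
definition avg_ber :: "real \<Rightarrow> real \<Rightarrow> real \<Rightarrow> real \<Rightarrow> real \<Rightarrow> real \<Rightarrow> (nat \<Rightarrow> real)
    \<Rightarrow> nat \<Rightarrow> real \<Rightarrow> real" where
  "avg_ber mX mY OmX OmY \<alpha> \<delta>1 \<delta>2 \<delta>3 gbar =
     \<delta>1 * (\<Sum>j = 1..\<delta>3. LBINT r:{0<..}.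
        bx_pdf mX mY OmX OmY r * Qfun (sqrt (2 * \<delta>2 j * inst_snr mX mY OmX OmY \<alpha> gbar r)))"

end

theory Submission
  imports Defs "HOL-Probability.Probability" "HOL-Real_Asymp.Real_Asymp"
begin

text \<open>The envelope density is comparable to \<open>r powr (2 * mX - 1)\<close> near \<open>0\<close> and bounded by a
  multiple of it everywhere, since the growth of the \<open>1F1\<close> factor is dominated by the Gaussian
  factor. The SNR equals a constant times \<open>gbar * r powr (4 / \<alpha>)\<close>, so it is of order one at the
  scale \<open>r0 = gbar powr (- \<alpha> / 4)\<close>. Below \<open>r0\<close> the error integral is comparable to
  \<open>r0 powr (2 * mX) = gbar powr (- \<alpha> / 2 * mX)\<close>; above \<open>r0\<close> a moment bound on the Q-function,
  which decays faster than any power, gives a contribution of the same order. Each term of the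
  average BER, hence the BER itself, is thus squeezed between two multiples of
  \<open>gbar powr (- \<alpha> / 2 * mX)\<close>, and the ratio of logarithms tends to \<open>- \<alpha> / 2 * mX\<close>.\<close>

definition decays_as_powr :: "real \<Rightarrow> (real \<Rightarrow> real) \<Rightarrow> bool" where
  "decays_as_powr \<beta> f \<longleftrightarrow>
     (\<exists>c1>0. \<exists>c2>0. \<forall>\<^sub>F x in at_top. c1 * x powr (-\<beta>) \<le> f x \<and> f x \<le> c2 * x powr (-\<beta>))"

lemma decays_as_powrI:
  assumes "c1 > 0" "c2 > 0"
    and "\<And>x. x \<ge> x0 \<Longrightarrow> c1 * x powr (-\<beta>) \<le> f x \<and> f x \<le> c2 * x powr (-\<beta>)"
  shows "decays_as_powr \<beta> f"
  unfolding decays_as_powr_def using assms eventually_at_top_linorder by blast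

lemma decays_as_powr_cmult:
  assumes "c > 0" and "decays_as_powr \<beta> f"
  shows "decays_as_powr \<beta> (\<lambda>x. c * f x)"
proof -
  obtain c1 c2 where c: "c1 > 0" "c2 > 0"
    and ev: "\<forall>\<^sub>F x in at_top. c1 * x powr (-\<beta>) \<le> f x \<and> f x \<le> c2 * x powr (-\<beta>)"
    using assms(2) unfolding decays_as_powr_def by blast
  have "\<forall>\<^sub>F x in at_top. (c * c1) * x powr (-\<beta>) \<le> c * f x \<and> c * f x \<le> (c * c2) * x powr (-\<beta>)"
    using ev by eventually_elim (use \<open>c > 0\<close> in \<open>simp add: mult.assoc\<close>)
  then show ?thesis unfolding decays_as_powr_def using c \<open>c > 0\<close> by (meson mult_pos_pos)
qed

lemma decays_as_powr_add:
  assumes "decays_as_powr \<beta> f" and "decays_as_powr \<beta> g"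
  shows "decays_as_powr \<beta> (\<lambda>x. f x + g x)"
proof -
  obtain c1 c2 where c: "c1 > 0" "c2 > 0"
    and f: "\<forall>\<^sub>F x in at_top. c1 * x powr (-\<beta>) \<le> f x \<and> f x \<le> c2 * x powr (-\<beta>)"
    using assms(1) unfolding decays_as_powr_def by blast
  obtain d1 d2 where d: "d1 > 0" "d2 > 0"
    and g: "\<forall>\<^sub>F x in at_top. d1 * x powr (-\<beta>) \<le> g x \<and> g x \<le> d2 * x powr (-\<beta>)"
    using assms(2) unfolding decays_as_powr_def by blast
  have "\<forall>\<^sub>F x in at_top. (c1 + d1) * x powr (-\<beta>) \<le> f x + g x \<and> f x + g x \<le> (c2 + d2) * x powr (-\<beta>)"
    using f g by eventually_elim (simp add: distrib_right add_mono)
  then show ?thesis unfolding decays_as_powr_def using c d by (meson add_pos_pos)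
qed

lemma decays_as_powr_sum:
  assumes "finite A" and "A \<noteq> {}" and "\<And>j. j \<in> A \<Longrightarrow> decays_as_powr \<beta> (f j)"
  shows "decays_as_powr \<beta> (\<lambda>x. \<Sum>j\<in>A. f j x)"
  using assms by (induction A rule: finite_ne_induct) (auto intro: decays_as_powr_add)

lemma decays_as_powr_ln_ratio_tendsto:
  assumes "decays_as_powr \<beta> f"
  shows "((\<lambda>x. ln (f x) / ln x) \<longlongrightarrow> -\<beta>) at_top"
proof -
  obtain c1 c2 where c: "c1 > 0" "c2 > 0"
    and ev: "\<forall>\<^sub>F x in at_top. c1 * x powr (-\<beta>) \<le> f x \<and> f x \<le> c2 * x powr (-\<beta>)"
    using assms unfolding decays_as_powr_def by blast
  have ln_bounds: "(ln c1 - \<beta> * ln x) / ln x \<le> ln (f x) / ln x \<and> ln (f x) / ln x \<le> (ln c2 - \<beta> * ln x) / ln x"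
    if x: "x > 1" and f: "c1 * x powr (-\<beta>) \<le> f x \<and> f x \<le> c2 * x powr (-\<beta>)" for x
  proof -
    have pos: "0 < c1 * x powr (-\<beta>)" using c x by simp
    have "ln (c1 * x powr (-\<beta>)) \<le> ln (f x)" and "ln (f x) \<le> ln (c2 * x powr (-\<beta>))"
      using f pos by (simp_all add: order.strict_trans2)
    moreover have "ln (c * x powr (-\<beta>)) = ln c - \<beta> * ln x" if "c > 0" for c
      using that x by (simp add: ln_mult ln_powr)
    ultimately show ?thesis using c x by (simp add: divide_right_mono)
  qed
  show ?thesis
  proof (rule tendsto_sandwich)
    show "\<forall>\<^sub>F x in at_top. (ln c1 - \<beta> * ln x) / ln x \<le> ln (f x) / ln x"
      using ev eventually_gt_at_top[of 1] by eventually_elim (use ln_bounds in blast)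
    show "\<forall>\<^sub>F x in at_top. ln (f x) / ln x \<le> (ln c2 - \<beta> * ln x) / ln x"
      using ev eventually_gt_at_top[of 1] by eventually_elim (use ln_bounds in blast)
  qed real_asymp+
qed

lemma pochhammer_ratio_le_geometric:
  fixes a b \<theta> :: real
  assumes a: "a > 0" and b: "b > 0" and \<theta>: "\<theta> > 1"
  shows "\<exists>B>0. \<forall>n. pochhammer a n / pochhammer b n \<le> B * \<theta>^n"
proof -
  define R where "R n = pochhammer a n / pochhammer b n" for n
  define N where "N = nat \<lceil>(a - b) / (\<theta> - 1)\<rceil>"
  define B where "B = Max ((\<lambda>n. R n / \<theta>^n) ` {..N})"
  have R_pos: "R n > 0" for n unfolding R_def using a b by (simp add: pochhammer_pos)
  have R_Suc: "R (Suc n) = R n * ((a + n) / (b + n))" for n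
    unfolding R_def by (simp add: pochhammer_Suc field_simps)
  have ratio_le: "(a + n) / (b + n) \<le> \<theta>" if "n \<ge> N" for n :: nat
  proof -
    have "real n \<ge> (a - b) / (\<theta> - 1)" using that unfolding N_def
      by (metis le_nat_iff of_nat_le_iff order_trans real_nat_ceiling_ge)
    then have "(\<theta> - 1) * n \<ge> a - b" using \<theta> by (simp add: field_simps)
    then have "a + n \<le> \<theta> * (b + n)" using \<theta> b
      by (simp add: algebra_simps) (smt (verit) mult_le_cancel_right1)
    then show ?thesis using b by (simp add: field_simps)
  qed
  have le_B_initial: "R n / \<theta>^n \<le> B" if "n \<le> N" for n
    unfolding B_def by (rule Max_ge) (use that in auto)
  have le_B: "R n / \<theta>^n \<le> B" for n
  proof (induction n)
    case 0 then show ?case using le_B_initial[of 0] by simp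
  next
    case (Suc n)
    show ?case
    proof (cases "Suc n \<le> N")
      case True then show ?thesis using le_B_initial by blast
    next
      case False
      have "R (Suc n) / \<theta>^Suc n = (R n / \<theta>^n) * (((a + n) / (b + n)) / \<theta>)"
        using \<theta> by (simp add: R_Suc field_simps)
      also have "\<dots> \<le> (R n / \<theta>^n) * 1"
        using ratio_le[of n] False \<theta> R_pos[of n] a b
        by (intro mult_left_mono) (auto simp: field_simps)
      finally show ?thesis using Suc by simp
    qed
  qed
  have "B > 0" using le_B[of 0] R_pos[of 0] by simp
  moreover have "R n \<le> B * \<theta>^n" for n using le_B[of n] \<theta> by (simp add: field_simps)
  ultimately show ?thesis unfolding R_def by blast
qed

lemma hyp1F1_ge_one_le_exp:
  fixes a b \<theta> :: real
  assumes a: "a > 0" and b: "b > 0" and \<theta>: "\<theta> > 1"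
  shows "\<exists>B>0. \<forall>z\<ge>0. 1 \<le> hyp1F1 a b z \<and> hyp1F1 a b z \<le> B * exp (\<theta> * z)"
proof -
  obtain B where B: "B > 0" "\<And>n. pochhammer a n / pochhammer b n \<le> B * \<theta>^n"
    using pochhammer_ratio_le_geometric[OF a b \<theta>] by blast
  have "1 \<le> hyp1F1 a b z \<and> hyp1F1 a b z \<le> B * exp (\<theta> * z)" if z: "z \<ge> 0" for z
  proof -
    define t where "t n = pochhammer a n / pochhammer b n * z^n / fact n" for n
    have t_nonneg: "t n \<ge> 0" for n
      unfolding t_def using a b z by (simp add: pochhammer_pos less_imp_le)
    have t_le: "t n \<le> B * ((\<theta> * z)^n /\<^sub>R fact n)" for n
    proof -
      have "t n = (pochhammer a n / pochhammer b n) * (z^n / fact n)" unfolding t_def by simp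
      also have "\<dots> \<le> (B * \<theta>^n) * (z^n / fact n)"
        by (rule mult_right_mono[OF B(2)]) (use z in auto)
      also have "\<dots> = B * ((\<theta> * z)^n /\<^sub>R fact n)" by (simp add: power_mult_distrib field_simps)
      finally show ?thesis .
    qed
    have exp_sums: "(\<lambda>n. B * ((\<theta> * z)^n /\<^sub>R fact n)) sums (B * exp (\<theta> * z))"
      by (rule sums_mult[OF exp_converges])
    have summable_t: "summable t"
      by (rule summable_comparison_test'[OF sums_summable[OF exp_sums]]) (use t_nonneg t_le in auto)
    have "sum t {0} \<le> suminf t"
      by (rule sum_le_suminf[OF summable_t]) (use t_nonneg in auto)
    moreover have "suminf t \<le> B * exp (\<theta> * z)"
      by (rule sums_le[OF t_le summable_sums[OF summable_t] exp_sums])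
    moreover have "hyp1F1 a b z = suminf t" unfolding hyp1F1_def t_def by simp
    ultimately show ?thesis by (simp add: t_def)
  qed
  with B(1) show ?thesis by blast
qed

lemma hyp1F1_mul_exp_bounded:
  fixes a b q :: real
  assumes a: "a > 0" and b: "b > 0" and q: "0 < q" "q < 1"
  shows "\<exists>B>0. \<forall>s\<ge>0. exp (-s) \<le> hyp1F1 a b (q * s) * exp (-s) \<and> hyp1F1 a b (q * s) * exp (-s) \<le> B"
proof -
  have "1 / q > 1" using q by (simp add: field_simps)
  then obtain B where B: "B > 0" "\<And>z. z \<ge> 0 \<Longrightarrow> 1 \<le> hyp1F1 a b z \<and> hyp1F1 a b z \<le> B * exp (1 / q * z)"
    using hyp1F1_ge_one_le_exp[OF a b] by blast
  have "exp (-s) \<le> hyp1F1 a b (q * s) * exp (-s) \<and> hyp1F1 a b (q * s) * exp (-s) \<le> B" if "s \<ge> 0" for s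
  proof -
    have h: "1 \<le> hyp1F1 a b (q * s)" "hyp1F1 a b (q * s) \<le> B * exp s"
      using B(2)[of "q * s"] q that by auto
    have "hyp1F1 a b (q * s) * exp (-s) \<le> B * exp s * exp (-s)"
      using h(2) by (intro mult_right_mono) auto
    then show ?thesis using h(1) by (simp add: exp_minus field_simps)
  qed
  with B(1) show ?thesis by blast
qed

lemma bx_pdf_powr_bounds:
  fixes mX mY OmX OmY :: real
  assumes mX: "mX > 0" and mY: "mY > 0" and OmX: "OmX > 0" and OmY: "OmY > 0"
  shows "\<exists>A>0. \<exists>A'>0. \<forall>r>0. 0 \<le> bx_pdf mX mY OmX OmY r \<and>
      bx_pdf mX mY OmX OmY r \<le> A * r powr (2 * mX - 1) \<and>
      (r \<le> 1 \<longrightarrow> A' * r powr (2 * mX - 1) \<le> bx_pdf mX mY OmX OmY r)"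
proof -
  define q where "q = mX * OmY / (mY * OmX + mX * OmY)"
  define \<mu> where "\<mu> = mX / OmX"
  define K where "K = 2 / Gamma mX * (mY * OmX / (mY * OmX + mX * OmY)) powr mY * (mX / OmX) powr mX"
  define H where "H s = hyp1F1 mY mX (q * s) * exp (-s)" for s
  have den: "mY * OmX + mX * OmY > 0" using assms by (simp add: add_pos_pos)
  have q: "0 < q" "q < 1" unfolding q_def using assms den by (auto simp: field_simps)
  have \<mu>: "\<mu> > 0" unfolding \<mu>_def using assms by simp
  have K: "K > 0" unfolding K_def using assms den by (auto intro!: Gamma_real_pos)
  obtain B where B: "B > 0" "\<And>s. s \<ge> 0 \<Longrightarrow> exp (-s) \<le> H s \<and> H s \<le> B"
    unfolding H_def using hyp1F1_mul_exp_bounded[OF mY mX q] by blast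
  have pdf_eq: "bx_pdf mX mY OmX OmY r = K * r powr (2 * mX - 1) * H (\<mu> * r\<^sup>2)" for r
  proof -
    have "mX\<^sup>2 * OmY * r\<^sup>2 / (OmX * (mY * OmX + mX * OmY)) = q * (\<mu> * r\<^sup>2)"
      unfolding q_def \<mu>_def by (simp add: power2_eq_square mult_ac)
    then show ?thesis unfolding bx_pdf_def H_def K_def \<mu>_def
      by (simp only: divide_inverse mult_ac mult_minus_left)
  qed
  have "0 \<le> bx_pdf mX mY OmX OmY r \<and> bx_pdf mX mY OmX OmY r \<le> (K * B) * r powr (2 * mX - 1) \<and>
      (r \<le> 1 \<longrightarrow> (K * exp (-\<mu>)) * r powr (2 * mX - 1) \<le> bx_pdf mX mY OmX OmY r)" if "r > 0" for r
  proof -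
    have H: "exp (-(\<mu> * r\<^sup>2)) \<le> H (\<mu> * r\<^sup>2)" "H (\<mu> * r\<^sup>2) \<le> B"
      using B(2)[of "\<mu> * r\<^sup>2"] \<mu> by auto
    have "exp (-\<mu>) \<le> H (\<mu> * r\<^sup>2)" if "r \<le> 1"
      using H(1) \<open>r > 0\<close> that \<mu> by (smt (verit) exp_le_cancel_iff mult_left_le power_le_one)
    moreover have "0 < H (\<mu> * r\<^sup>2)" using H(1) by (smt (verit) exp_gt_zero)
    ultimately show ?thesis unfolding pdf_eq using K H(2) \<open>r > 0\<close> by (simp add: mult_left_mono)
  qed
  moreover have "K * B > 0" "K * exp (-\<mu>) > 0" using K B by auto
  ultimately show ?thesis by blast
qed

lemma bx_pdf_borel_measurable: "bx_pdf mX mY OmX OmY \<in> borel_measurable borel"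
  unfolding bx_pdf_def hyp1F1_def by measurable

lemma hyp2F1_series_ge_one:
  fixes a b c w :: real
  assumes a: "a > 0" and b: "b > 0" and c: "c > 0" and w: "0 \<le> w" "w < 1"
  shows "hyp2F1_series a b c w \<ge> 1"
proof -
  define \<theta> where "\<theta> = sqrt (2 / (1 + w))"
  have \<theta>: "\<theta> > 1" unfolding \<theta>_def using w by (simp add: real_less_rsqrt)
  have \<theta>w: "\<theta>^2 * w < 1" unfolding \<theta>_def using w by (simp add: field_simps)
  obtain B1 where B1: "B1 > 0" "\<And>n. pochhammer a n / pochhammer 1 n \<le> B1 * \<theta>^n"
    using pochhammer_ratio_le_geometric[OF a zero_less_one \<theta>] by blast
  obtain B2 where B2: "B2 > 0" "\<And>n. pochhammer b n / pochhammer c n \<le> B2 * \<theta>^n"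
    using pochhammer_ratio_le_geometric[OF b c \<theta>] by blast
  define t where "t n = pochhammer a n * pochhammer b n / pochhammer c n * w^n / fact n" for n
  have t_nonneg: "t n \<ge> 0" for n unfolding t_def using a b c w by (simp add: pochhammer_pos less_imp_le)
  have t_le: "t n \<le> (B1 * B2) * (\<theta>^2 * w)^n" for n
  proof -
    have "t n = (pochhammer a n / pochhammer 1 n) * (pochhammer b n / pochhammer c n) * w^n"
      unfolding t_def by (simp add: pochhammer_fact)
    also have "\<dots> \<le> (B1 * \<theta>^n) * (B2 * \<theta>^n) * w^n"
      using a b c w B1 B2 \<theta>
      by (intro mult_right_mono mult_mono) (auto simp: pochhammer_pos less_imp_le)
    also have "\<dots> = (B1 * B2) * (\<theta>^2 * w)^n"
      by (simp add: power_mult_distrib power_mult[symmetric] power_add[symmetric] mult_2_right field_simps)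
    finally show ?thesis .
  qed
  have "summable (\<lambda>n. (B1 * B2) * (\<theta>^2 * w)^n)"
    by (rule summable_mult, rule summable_geometric) (use \<theta>w w \<theta> in auto)
  then have summable_t: "summable t"
    by (rule summable_comparison_test') (use t_nonneg t_le in auto)
  have "sum t {0} \<le> suminf t"
    by (rule sum_le_suminf[OF summable_t]) (use t_nonneg in auto)
  moreover have "hyp2F1_series a b c w = suminf t" unfolding hyp2F1_series_def t_def by simp
  ultimately show ?thesis by (simp add: t_def)
qed

lemma C_alpha_pos:
  fixes mX mY OmX OmY \<alpha> :: real
  assumes "mX > 0" and "mY > 0" and "OmX > 0" and "OmY > 0" and "\<alpha> > 0"
  shows "C_alpha mX mY OmX OmY \<alpha> > 0"
proof -
  define z where "z = - (mX * OmY) / (mY * OmX)"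
  have z: "z < 0" unfolding z_def using assms by (simp add: divide_neg_pos)
  have "0 \<le> z / (z - 1)" "z / (z - 1) < 1" using z by (auto simp: field_simps)
  then have "hyp2F1_series mY (mX - - 2 / \<alpha>) mX (z / (z - 1)) \<ge> 1"
    by (intro hyp2F1_series_ge_one) (use assms in \<open>auto intro: add_pos_pos\<close>)
  then have "hyp2F1 mY (- 2 / \<alpha>) mX z > 0"
    unfolding hyp2F1_def using z by simp
  moreover have "Gamma mX > 0" "Gamma (mX + 2 / \<alpha>) > 0"
    using assms by (auto intro!: Gamma_real_pos add_pos_pos)
  ultimately show ?thesis unfolding C_alpha_def z_def[symmetric] by simp
qed

lemma Qfun_eq_std_normal: "Qfun x = (\<integral>t. std_normal_density t * indicator {x..} t \<partial>lborel)"
proof -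
  have "Qfun x = 1 / sqrt (2 * pi) * (\<integral>t. indicator {x..} t * exp (- t\<^sup>2 / 2) \<partial>lborel)"
    unfolding Qfun_def set_lebesgue_integral_def by simp
  also have "\<dots> = (\<integral>t. std_normal_density t * indicator {x..} t \<partial>lborel)"
    by (subst integral_mult_right_zero[symmetric], rule Bochner_Integration.integral_cong)
      (auto simp: std_normal_density_def)
  finally show ?thesis .
qed

lemma integrable_std_normal_indicator: "integrable lborel (\<lambda>t. std_normal_density t * indicator {x..} t)"
  by (rule integrable_real_mult_indicator) auto

lemma Qfun_antimono: "x \<le> y \<Longrightarrow> Qfun y \<le> Qfun x"
  unfolding Qfun_eq_std_normal
  by (rule integral_mono[OF integrable_std_normal_indicator integrable_std_normal_indicator])
    (auto split: split_indicator)

lemma Qfun_borel_measurable: "Qfun \<in> borel_measurable borel"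
proof -
  have "mono (\<lambda>x. - Qfun x)" by (auto intro!: monoI Qfun_antimono)
  then have "(\<lambda>x. - (- Qfun x)) \<in> borel_measurable borel"
    using borel_measurable_mono borel_measurable_uminus by blast
  then show ?thesis by simp
qed

lemma Qfun_pos: "Qfun x > 0"
proof -
  define m where "m = std_normal_density (\<bar>x\<bar> + 1)"
  have m: "m > 0" unfolding m_def by (simp add: normal_density_pos)
  have "m * indicator {x..x+1} t \<le> std_normal_density t * indicator {x..} t" for t
  proof (cases "t \<in> {x..x+1}")
    case True
    then have "t\<^sup>2 \<le> (\<bar>x\<bar> + 1)\<^sup>2"
      using abs_le_square_iff by fastforce
    then have "m \<le> std_normal_density t"
      unfolding m_def std_normal_density_def by (intro mult_left_mono) auto
    then show ?thesis using True by (auto split: split_indicator)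
  qed (auto split: split_indicator)
  then have "(\<integral>t. m * indicator {x..x+1} t \<partial>lborel) \<le> Qfun x"
    unfolding Qfun_eq_std_normal
    by (intro integral_mono integrable_std_normal_indicator integrable_mult_right)
      (auto simp: integrable_indicator_iff)
  then show ?thesis using m by simp
qed

lemma Qfun_le_moment:
  assumes x: "x > 0"
  shows "Qfun x \<le> (\<integral>t. std_normal_density t * \<bar>t\<bar>^k \<partial>lborel) / x^k"
proof -
  have "std_normal_density t * indicator {x..} t \<le> std_normal_density t * \<bar>t\<bar>^k / x^k" for t
  proof (cases "t \<ge> x")
    case True
    then have "1 \<le> \<bar>t\<bar>^k / x^k" using x by (simp add: power_mono)
    then have "std_normal_density t * 1 \<le> std_normal_density t * (\<bar>t\<bar>^k / x^k)"
      by (intro mult_left_mono) auto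
    then show ?thesis using True by simp
  qed (use x in simp)
  then have "Qfun x \<le> (\<integral>t. std_normal_density t * \<bar>t\<bar>^k / x^k \<partial>lborel)"
    unfolding Qfun_eq_std_normal using integrable_std_normal_moment_abs[of k]
    by (intro integral_mono integrable_std_normal_indicator) auto
  then show ?thesis by simp
qed

lemma has_integral_nonneg_lborel:
  fixes f :: "real \<Rightarrow> real"
  assumes f: "f \<in> borel_measurable borel" and S: "S \<in> sets borel"
    and nonneg: "\<And>x. x \<in> S \<Longrightarrow> 0 \<le> f x" and I: "(f has_integral I) S"
  shows "integrable lborel (\<lambda>x. f x * indicator S x)" "(\<integral>x. f x * indicator S x \<partial>lborel) = I"
proof -
  define g where "g x = f x * indicator S x" for x
  have g_meas: "g \<in> borel_measurable borel" unfolding g_def using f S by measurable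
  have g_nonneg: "0 \<le> g x" for x unfolding g_def using nonneg by (auto simp: indicator_def)
  have "g = (\<lambda>x. if x \<in> S then f x else 0)" by (auto simp: g_def indicator_def)
  then have gI: "(g has_integral I) UNIV" using I by (simp add: has_integral_restrict_UNIV)
  have "integral\<^sup>N lborel g = I" by (rule nn_integral_has_integral_lborel[OF g_meas g_nonneg gI])
  then have "integrable lborel g"
    by (intro integrableI_nonneg) (use g_meas g_nonneg in auto)
  moreover from this have "(\<integral>x. g x \<partial>lborel) = I"
    using integral_lborel integral_unique[OF gI] by metis
  ultimately show "integrable lborel (\<lambda>x. f x * indicator S x)" "(\<integral>x. f x * indicator S x \<partial>lborel) = I"
    unfolding g_def by auto
qed

lemma integral_le_powr_majorant:
  fixes F :: "real \<Rightarrow> real" and a b e1 e2 r0 :: real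
  assumes F_meas: "F \<in> borel_measurable borel"
    and F_nonneg: "\<And>r. 0 \<le> F r" and F_zero: "\<And>r. r \<le> 0 \<Longrightarrow> F r = 0"
    and F_near: "\<And>r. 0 < r \<Longrightarrow> r \<le> r0 \<Longrightarrow> F r \<le> a * r powr e1"
    and F_far: "\<And>r. r0 \<le> r \<Longrightarrow> F r \<le> b * r powr e2"
    and "a \<ge> 0" "b \<ge> 0" "e1 > -1" "e2 < -1" "r0 > 0"
  shows "integrable lborel F"
    and "integral\<^sup>L lborel F \<le> a * (r0 powr (e1 + 1) / (e1 + 1)) + b * (- (r0 powr (e2 + 1)) / (e2 + 1))"
proof -
  define h1 where "h1 r = a * r powr e1" for r
  define h2 where "h2 r = b * r powr e2" for r
  have h1_nonneg: "0 \<le> h1 r" and h2_nonneg: "0 \<le> h2 r" for r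
    unfolding h1_def h2_def using assms by auto
  have "(h1 has_integral a * (r0 powr (e1 + 1) / (e1 + 1))) {0..r0}"
    unfolding h1_def by (intro has_integral_mult_right has_integral_powr_from_0) (use assms in auto)
  from has_integral_nonneg_lborel[OF _ _ _ this] h1_nonneg
  have I1: "integrable lborel (\<lambda>r. h1 r * indicator {0..r0} r)"
    "(\<integral>r. h1 r * indicator {0..r0} r \<partial>lborel) = a * (r0 powr (e1 + 1) / (e1 + 1))"
    unfolding h1_def by auto
  have "(h2 has_integral b * (- (r0 powr (e2 + 1)) / (e2 + 1))) {r0..}"
    unfolding h2_def by (intro has_integral_mult_right has_integral_powr_to_inf) (use assms in auto)
  from has_integral_nonneg_lborel[OF _ _ _ this] h2_nonneg
  have I2: "integrable lborel (\<lambda>r. h2 r * indicator {r0..} r)"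
    "(\<integral>r. h2 r * indicator {r0..} r \<partial>lborel) = b * (- (r0 powr (e2 + 1)) / (e2 + 1))"
    unfolding h2_def by auto
  define H where "H r = h1 r * indicator {0..r0} r + h2 r * indicator {r0..} r" for r
  have H_int: "integrable lborel H" unfolding H_def using I1 I2 by simp
  have F_le_H: "F r \<le> H r" for r
  proof -
    have "0 \<le> h1 r * indicator {0..r0} r" "0 \<le> h2 r * indicator {r0..} r"
      using h1_nonneg h2_nonneg by simp_all
    moreover consider "r \<le> 0" | "0 < r" "r \<le> r0" | "r0 \<le> r" by linarith
    then have "F r \<le> h1 r * indicator {0..r0} r \<or> F r \<le> h2 r * indicator {r0..} r"
      by cases (use F_zero F_near F_far h1_nonneg[of r] in \<open>auto simp: h1_def h2_def\<close>)
    ultimately show ?thesis unfolding H_def by linarith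
  qed
  show F_int: "integrable lborel F"
    by (rule Bochner_Integration.integrable_bound[OF H_int])
      (use F_meas F_nonneg F_le_H in \<open>auto intro: order_trans[OF _ abs_ge_self]\<close>)
  have "integral\<^sup>L lborel F \<le> integral\<^sup>L lborel H" by (rule integral_mono[OF F_int H_int F_le_H])
  also have "\<dots> = a * (r0 powr (e1 + 1) / (e1 + 1)) + b * (- (r0 powr (e2 + 1)) / (e2 + 1))"
    unfolding H_def using I1 I2 by simp
  finally show "integral\<^sup>L lborel F \<le> \<dots>" .
qed

lemma integral_ge_powr_minorant:
  fixes F :: "real \<Rightarrow> real" and c e r0 :: real
  assumes F_int: "integrable lborel F" and F_nonneg: "\<And>r. 0 \<le> F r"
    and F_near: "\<And>r. 0 < r \<Longrightarrow> r \<le> r0 \<Longrightarrow> c * r powr e \<le> F r"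
    and "c \<ge> 0" "e > -1" "r0 > 0"
  shows "c * (r0 powr (e + 1) / (e + 1)) \<le> integral\<^sup>L lborel F"
proof -
  define h where "h r = c * r powr e" for r
  have h_nonneg: "0 \<le> h r" for r unfolding h_def using assms by simp
  have "(h has_integral c * (r0 powr (e + 1) / (e + 1))) {0..r0}"
    unfolding h_def by (intro has_integral_mult_right has_integral_powr_from_0) (use assms in auto)
  from has_integral_nonneg_lborel[OF _ _ _ this] h_nonneg
  have I: "integrable lborel (\<lambda>r. h r * indicator {0..r0} r)"
    "(\<integral>r. h r * indicator {0..r0} r \<partial>lborel) = c * (r0 powr (e + 1) / (e + 1))"
    unfolding h_def by auto
  have "h r * indicator {0..r0} r \<le> F r" for r
    using F_near[of r] F_nonneg[of r] by (cases "0 < r \<and> r \<le> r0") (auto simp: h_def indicator_def)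
  from integral_mono[OF I(1) F_int this] show ?thesis using I(2) by simp
qed

lemma tail_bound_sqrt_powr:
  fixes Q :: "real \<Rightarrow> real" and M c p r :: real and m :: nat
  assumes Q_tail: "\<And>x. x > 0 \<Longrightarrow> Q x \<le> M / x^(2 * m)" and "c > 0" "r > 0"
  shows "Q (sqrt (c * r powr p)) \<le> M / c^m * r powr (-(p * m))"
proof -
  have "sqrt (c * r powr p) ^ (2 * m) = (c * r powr p) ^ m"
    using assms by (simp add: power_mult)
  also have "\<dots> = c^m * r powr (p * m)"
    using \<open>r > 0\<close> by (simp add: power_mult_distrib powr_realpow[symmetric] powr_powr)
  finally have "Q (sqrt (c * r powr p)) \<le> M / (c^m * r powr (p * m))"
    using Q_tail[of "sqrt (c * r powr p)"] assms by simp
  then show ?thesis using \<open>r > 0\<close> by (simp add: powr_minus divide_inverse)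
qed

lemma scaled_tail_integral_le:
  fixes f Q :: "real \<Rightarrow> real" and a p \<nu> A M g :: real and m :: nat
  assumes f_meas: "f \<in> borel_measurable borel" and Q_meas: "Q \<in> borel_measurable borel"
    and f_upper: "\<And>r. r > 0 \<Longrightarrow> 0 \<le> f r \<and> f r \<le> A * r powr (a - 1)"
    and Q_pos: "\<And>x. 0 < Q x" and Q_antimono: "\<And>x y. x \<le> y \<Longrightarrow> Q y \<le> Q x"
    and Q_tail: "\<And>x. x > 0 \<Longrightarrow> Q x \<le> M / x^(2 * m)"
    and a: "a > 0" and p: "p > 0" and \<nu>: "\<nu> > 0" and pm: "a < p * m" and g: "g \<ge> 1"
  shows "integrable lborel (\<lambda>r. f r * Q (sqrt (\<nu> * g * r powr p)) * indicator {0<..} r)"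
    and "(\<integral>r. f r * Q (sqrt (\<nu> * g * r powr p)) * indicator {0<..} r \<partial>lborel)
           \<le> (A * Q 0 / a + A * M / (\<nu>^m * (p * m - a))) * g powr (- (a / p))"
proof -
  have A: "A \<ge> 0" using f_upper[of 1] by simp
  have M: "M \<ge> 0" using Q_tail[of 1] Q_pos[of 1] by simp
  define F where "F r = f r * Q (sqrt (\<nu> * g * r powr p)) * indicator {0<..} r" for r
  define r0 where "r0 = g powr (-1 / p)"
  have "1 \<le> g powr (1 / p)" using g p by (intro ge_one_powr_ge_zero) auto
  then have "r0 > 0" unfolding r0_def using g by (auto simp: powr_minus field_simps)
  have r0_powr: "r0 powr e = g powr (- e / p)" for e unfolding r0_def by (simp add: powr_powr)
  have F_meas: "F \<in> borel_measurable borel" unfolding F_def using f_meas Q_meas by measurable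
  have F_nonneg: "0 \<le> F r" for r
    unfolding F_def using f_upper Q_pos by (simp add: indicator_def less_imp_le)
  have F_zero: "F r = 0" if "r \<le> 0" for r unfolding F_def using that by simp
  have F_near: "F r \<le> (A * Q 0) * r powr (a - 1)" if "0 < r" for r
  proof -
    have "Q (sqrt (\<nu> * g * r powr p)) \<le> Q 0" using \<nu> g by (intro Q_antimono) simp
    then have "f r * Q (sqrt (\<nu> * g * r powr p)) \<le> (A * r powr (a - 1)) * Q 0"
      using f_upper[OF that] Q_pos by (intro mult_mono) (auto simp: less_imp_le)
    then show ?thesis unfolding F_def using that by (simp add: mult_ac)
  qed
  have F_far: "F r \<le> (A * M / (\<nu> * g)^m) * r powr (a - 1 - p * m)" if "r0 \<le> r" for r
  proof -
    have "r > 0" using that \<open>r0 > 0\<close> by simp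
    have "f r * Q (sqrt (\<nu> * g * r powr p)) \<le> (A * r powr (a - 1)) * (M / (\<nu> * g)^m * r powr (-(p * m)))"
      using f_upper[OF \<open>r > 0\<close>] Q_pos tail_bound_sqrt_powr[OF Q_tail, of "\<nu> * g" r p] \<open>r > 0\<close> \<nu> g
      by (intro mult_mono) (auto simp: less_imp_le)
    also have "\<dots> = (A * M / (\<nu> * g)^m) * (r powr (a - 1) * r powr (-(p * m)))"
      by (simp add: divide_inverse mult_ac)
    also have "r powr (a - 1) * r powr (-(p * m)) = r powr (a - 1 - p * m)"
      by (simp add: powr_add[symmetric])
    finally show ?thesis unfolding F_def using \<open>r > 0\<close> by simp
  qed
  note majorant = integral_le_powr_majorant[OF F_meas F_nonneg F_zero F_near F_far _ _ _ _ \<open>r0 > 0\<close>]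
  show "integrable lborel F" using majorant(1) A M Q_pos[of 0] \<nu> g a pm \<open>r0 > 0\<close> by simp
  have "r0 powr (a - p * m) = g powr (- (a / p)) * g^m"
    using g p by (simp add: r0_powr powr_add[symmetric] powr_realpow[symmetric] field_simps)
  then have "A * Q 0 * (r0 powr a / a) + A * M / (\<nu> * g)^m * (- (r0 powr (a - p * m)) / (a - p * m))
      = (A * Q 0 / a + A * M / (\<nu>^m * (p * m - a))) * g powr (- (a / p))"
    unfolding r0_powr using g \<nu> pm by (simp add: power_mult_distrib field_simps)
  then show "integral\<^sup>L lborel F \<le> (A * Q 0 / a + A * M / (\<nu>^m * (p * m - a))) * g powr (- (a / p))"
    using majorant(2) A M Q_pos[of 0] \<nu> g a pm \<open>r0 > 0\<close> by simp
qed

lemma scaled_tail_integral_ge: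
  fixes f Q :: "real \<Rightarrow> real" and a p \<nu> A' g :: real
  assumes integrable: "integrable lborel (\<lambda>r. f r * Q (sqrt (\<nu> * g * r powr p)) * indicator {0<..} r)"
    and f_nonneg: "\<And>r. r > 0 \<Longrightarrow> 0 \<le> f r"
    and f_lower: "\<And>r. 0 < r \<Longrightarrow> r \<le> 1 \<Longrightarrow> A' * r powr (a - 1) \<le> f r"
    and Q_pos: "\<And>x. 0 < Q x" and Q_antimono: "\<And>x y. x \<le> y \<Longrightarrow> Q y \<le> Q x"
    and a: "a > 0" and p: "p > 0" and \<nu>: "\<nu> > 0" and A': "A' > 0" and g: "g \<ge> 1"
  shows "A' * Q (sqrt \<nu>) / a * g powr (- (a / p))
           \<le> (\<integral>r. f r * Q (sqrt (\<nu> * g * r powr p)) * indicator {0<..} r \<partial>lborel)"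
proof -
  define F where "F r = f r * Q (sqrt (\<nu> * g * r powr p)) * indicator {0<..} r" for r
  define r0 where "r0 = g powr (-1 / p)"
  have "1 \<le> g powr (1 / p)" using g p by (intro ge_one_powr_ge_zero) auto
  then have r0: "r0 > 0" "r0 \<le> 1" unfolding r0_def using g by (auto simp: powr_minus field_simps)
  have r0_powr: "r0 powr e = g powr (- e / p)" for e unfolding r0_def by (simp add: powr_powr)
  have F_nonneg: "0 \<le> F r" for r
    unfolding F_def using f_nonneg Q_pos by (simp add: indicator_def less_imp_le)
  have F_lower: "(A' * Q (sqrt \<nu>)) * r powr (a - 1) \<le> F r" if "0 < r" "r \<le> r0" for r
  proof -
    have "r powr p \<le> r0 powr p" using that p by (intro powr_mono2) auto
    also have "\<dots> = 1 / g" using r0_powr[of p] p g by (simp add: powr_minus_divide)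
    finally have "\<nu> * g * r powr p \<le> \<nu>" using \<nu> g by (simp add: field_simps)
    then have "Q (sqrt \<nu>) \<le> Q (sqrt (\<nu> * g * r powr p))" by (intro Q_antimono) simp
    then have "(A' * r powr (a - 1)) * Q (sqrt \<nu>) \<le> f r * Q (sqrt (\<nu> * g * r powr p))"
      using f_lower[of r] f_nonneg[of r] that r0 Q_pos A' by (intro mult_mono) (auto simp: less_imp_le)
    then show ?thesis unfolding F_def using that by (simp add: mult_ac)
  qed
  have "A' * Q (sqrt \<nu>) * (r0 powr a / a) \<le> integral\<^sup>L lborel F"
    using integral_ge_powr_minorant[OF integrable[folded F_def] F_nonneg F_lower] A' Q_pos[of "sqrt \<nu>"] a r0
    by simp
  then show ?thesis unfolding F_def r0_powr by simp
qed

lemma scaled_tail_integral_decays_as_powr: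
  fixes f Q :: "real \<Rightarrow> real" and a p \<nu> A A' M :: real and m :: nat
  assumes f_meas: "f \<in> borel_measurable borel" and Q_meas: "Q \<in> borel_measurable borel"
    and f_upper: "\<And>r. r > 0 \<Longrightarrow> 0 \<le> f r \<and> f r \<le> A * r powr (a - 1)"
    and f_lower: "\<And>r. 0 < r \<Longrightarrow> r \<le> 1 \<Longrightarrow> A' * r powr (a - 1) \<le> f r"
    and Q_pos: "\<And>x. 0 < Q x" and Q_antimono: "\<And>x y. x \<le> y \<Longrightarrow> Q y \<le> Q x"
    and Q_tail: "\<And>x. x > 0 \<Longrightarrow> Q x \<le> M / x^(2 * m)"
    and a: "a > 0" and p: "p > 0" and \<nu>: "\<nu> > 0" and A': "A' > 0" and pm: "a < p * m"
  shows "decays_as_powr (a / p) (\<lambda>g. \<integral>r. f r * Q (sqrt (\<nu> * g * r powr p)) * indicator {0<..} r \<partial>lborel)"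
proof -
  note upper = scaled_tail_integral_le[OF f_meas Q_meas f_upper Q_pos Q_antimono Q_tail a p \<nu> pm]
  have "A > 0" using A' f_lower[of 1] f_upper[of 1] by simp
  have "M \<ge> 0" using Q_tail[of 1] Q_pos[of 1] by simp
  have c1: "A' * Q (sqrt \<nu>) / a > 0" using A' Q_pos a by simp
  have c2: "A * Q 0 / a + A * M / (\<nu>^m * (p * m - a)) > 0"
    using \<open>A > 0\<close> \<open>M \<ge> 0\<close> Q_pos \<nu> pm a by (intro add_pos_nonneg) auto
  show ?thesis
    using upper scaled_tail_integral_ge[OF upper(1) _ f_lower Q_pos Q_antimono a p \<nu> A'] f_upper
    by (intro decays_as_powrI[OF c1 c2]) auto
qed

lemma inst_snr_eq_powr:
  fixes mX mY OmX OmY \<alpha> r g :: real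
  assumes "C_alpha mX mY OmX OmY \<alpha> * mX / OmX > 0" and "r > 0"
  shows "inst_snr mX mY OmX OmY \<alpha> g r
           = (C_alpha mX mY OmX OmY \<alpha> * mX / OmX) powr (2 / \<alpha>) * g * r powr (4 / \<alpha>)"
proof -
  define K where "K = C_alpha mX mY OmX OmY \<alpha> * mX / OmX"
  have "(r\<^sup>2) powr (2 / \<alpha>) = (r powr 2) powr (2 / \<alpha>)" using \<open>r > 0\<close> by (simp add: powr_realpow)
  also have "\<dots> = r powr (4 / \<alpha>)" by (simp add: powr_powr)
  finally have "(K * r\<^sup>2) powr (2 / \<alpha>) = K powr (2 / \<alpha>) * r powr (4 / \<alpha>)"
    using assms(1) unfolding K_def[symmetric] by (simp add: powr_mult)
  moreover have "inst_snr mX mY OmX OmY \<alpha> g r = g * (K * r\<^sup>2) powr (2 / \<alpha>)"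
    unfolding inst_snr_def K_def by (simp only: divide_inverse mult_ac)
  ultimately show ?thesis unfolding K_def[symmetric] by simp
qed

lemma avg_ber_term_decays_as_powr:
  fixes mX mY OmX OmY \<alpha> \<delta> :: real
  assumes mX: "mX > 0" and mY: "mY > 0" and OmX: "OmX > 0" and OmY: "OmY > 0"
    and \<alpha>: "\<alpha> > 0" and \<delta>: "\<delta> > 0"
  shows "decays_as_powr (\<alpha> / 2 * mX) (\<lambda>g. LBINT r:{0<..}.
           bx_pdf mX mY OmX OmY r * Qfun (sqrt (2 * \<delta> * inst_snr mX mY OmX OmY \<alpha> g r)))"
proof -
  define K where "K = C_alpha mX mY OmX OmY \<alpha> * mX / OmX"
  define p where "p = 4 / \<alpha>"
  define \<nu> where "\<nu> = 2 * \<delta> * K powr (2 / \<alpha>)"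
  define m where "m = nat \<lceil>\<alpha> * mX\<rceil> + 1"
  have K: "K > 0" unfolding K_def using C_alpha_pos[OF mX mY OmX OmY \<alpha>] mX OmX by simp
  have snr: "2 * \<delta> * inst_snr mX mY OmX OmY \<alpha> g r = \<nu> * g * r powr p" if "r > 0" for g r
    using inst_snr_eq_powr[of mX mY OmX OmY \<alpha> r g] K that unfolding \<nu>_def p_def K_def by simp
  have integrand: "(LBINT r:{0<..}. bx_pdf mX mY OmX OmY r * Qfun (sqrt (2 * \<delta> * inst_snr mX mY OmX OmY \<alpha> g r)))
      = (\<integral>r. bx_pdf mX mY OmX OmY r * Qfun (sqrt (\<nu> * g * r powr p)) * indicator {0<..} r \<partial>lborel)" for g
    unfolding set_lebesgue_integral_def by (rule Bochner_Integration.integral_cong) (auto simp: snr indicator_def)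
  obtain A A' where "A' > 0" and pdf_bounds: "\<And>r. r > 0 \<Longrightarrow> 0 \<le> bx_pdf mX mY OmX OmY r \<and>
      bx_pdf mX mY OmX OmY r \<le> A * r powr (2 * mX - 1) \<and>
      (r \<le> 1 \<longrightarrow> A' * r powr (2 * mX - 1) \<le> bx_pdf mX mY OmX OmY r)"
    using bx_pdf_powr_bounds[OF mX mY OmX OmY] by blast
  have "real m \<ge> \<alpha> * mX + 1" unfolding m_def by linarith
  then have "p * m \<ge> p * (\<alpha> * mX + 1)" using \<alpha> by (intro mult_left_mono) (auto simp: p_def)
  moreover have "p * (\<alpha> * mX + 1) = 4 * mX + 4 / \<alpha>" unfolding p_def using \<alpha> by (simp add: field_simps)
  ultimately have "2 * mX < p * m" using mX \<alpha> by (smt (verit) divide_pos_pos)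
  moreover have "p > 0" "\<nu> > 0" unfolding p_def \<nu>_def using \<alpha> \<delta> K by simp_all
  ultimately have "decays_as_powr (2 * mX / p)
      (\<lambda>g. \<integral>r. bx_pdf mX mY OmX OmY r * Qfun (sqrt (\<nu> * g * r powr p)) * indicator {0<..} r \<partial>lborel)"
    using pdf_bounds \<open>A' > 0\<close> mX
    by (intro scaled_tail_integral_decays_as_powr[where A = A and A' = A',
          OF bx_pdf_borel_measurable Qfun_borel_measurable _ _ Qfun_pos Qfun_antimono
          Qfun_le_moment[where k = "2 * m"]]) simp_all
  moreover have "2 * mX / p = \<alpha> / 2 * mX" unfolding p_def by simp
  ultimately show ?thesis unfolding integrand by simp
qed

theorem corollary3:
  fixes mX mY OmX OmY \<alpha> \<delta>1 :: real and \<delta>2 :: "nat \<Rightarrow> real" and \<delta>3 :: nat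
  assumes "mX > 0" and "mY > 0" and "OmX > 0" and "OmY > 0" and "\<alpha> > 0"
    and "\<delta>1 > 0" and "\<delta>3 \<ge> 1" and "\<And>j. j \<in> {1..\<delta>3} \<Longrightarrow> \<delta>2 j > 0"
  shows "((\<lambda>gbar. ln (avg_ber mX mY OmX OmY \<alpha> \<delta>1 \<delta>2 \<delta>3 gbar) / ln gbar)
            \<longlongrightarrow> - (\<alpha> / 2 * mX)) at_top"
proof -
  have "decays_as_powr (\<alpha> / 2 * mX) (avg_ber mX mY OmX OmY \<alpha> \<delta>1 \<delta>2 \<delta>3)"
    unfolding avg_ber_def[abs_def] using assms
    by (intro decays_as_powr_cmult decays_as_powr_sum avg_ber_term_decays_as_powr) auto
  then show ?thesis by (rule decays_as_powr_ln_ratio_tendsto)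
qed

end
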